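(* Let $\mathcal C$ be a concept hierarchy, $r_1,r_2,\epsilon\in[0,1]$ with $r_1\le r_2(1-\epsilon)$, $m$ a positive integer, and let $\mathcal H$ be the network defined below with a fixed failed set $F$ satisfying the stated constraint. Then for every $B\subseteq C_0$ presented at time 0 and every $c\in supp_{r_2}(B)$, at least $m(1-\epsilon)$ of the neurons $v\in reps(c)$ fire at time $level(c)$.
   Context: Concept hierarchies: fix positive integers $\ell_{max},n,k$. A universal set $D$ of concepts is partitioned into disjoint sets $D_0,\dots,D_{\ell_{max}}$ with $|D_0|=n$; $level(c)=\ell$ for $c\in D_\ell$. A concept hierarchy $\mathcal C$ consists of $C\subseteq D$, with $C_\ell=C\cap D_\ell$, and for each $c\in C_\ell$ with $1\le\ell\le\ell_{max}$ a set $children(c)\subseteq C_{\ell-1}$, such that $|C_{\ell_{max}}|=k$, $|children(c)|=k$ for all such $c$, and $children(c)\cap children(c')=\emptyset$ for distinct $c,c'\in C_\ell$. For $B\subseteq D_0$ and $r\in[0,1]$: $B(0)=B\cap C_0$; for $1\le\ell\le\ell_{max}$, $B(\ell)=\{c\in C_\ell:|children(c)\cap B(\ell-1)|\ge rk\}$; $supp_r(B)=\bigcup_{\ell}B(\ell)$. Network $\mathcal H$: neurons partitioned into layers $N_0,\dots,N_{\ell_{max}}$. Each $c\in D_0$ has a set $reps(c)$ of $m$ neurons in $N_0$, each $c\in C$ with $level(c)\ge1$ a set $reps(c)$ of $m$ neurons in $N_{level(c)}$, all pairwise disjoint. For $u\in N_{\ell-1}$, $v\in N_\ell$: $w(u,v)=1$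 iff $v\in reps(c)$ and $u\in reps(c')$ for a child $c'$ of $c$, else $0$. Threshold $\tau=r_2km(1-\epsilon)$. A fixed set $F$ of neurons is failed (failed neurons never fire), such that for every concept $c$ at least $m(1-\epsilon)$ neurons of $reps(c)$ are not in $F$. Input $B\subseteq C_0$ presented at time 0: a layer-0 neuron fires at time 0 iff it is in $\bigcup_{b\in B}reps(b)\setminus F$, and no layer-0 neuron fires at any other time. A non-failed $v\in N_\ell$, $\ell\ge1$, does not fire at time 0 and fires at time $t\ge1$ iff $\sum_{u\in N_{\ell-1}}w(u,v)x_u(t-1)\ge\tau$, where $x_u(s)\in\{0,1\}$ indicates whether $u$ fires at time $s$. *)

theory Defs
  imports Complex_Main
begin

text \<open>D is the universal set of concepts, level gives the layer
  (D_l = {c \<in> D. level c = l}), C is the set of concepts of the hierarchy,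
  children gives the children of concepts of level at least 1.\<close>

definition concept_hierarchy ::
  "nat \<Rightarrow> nat \<Rightarrow> nat \<Rightarrow> 'c set \<Rightarrow> ('c \<Rightarrow> nat) \<Rightarrow> 'c set \<Rightarrow> ('c \<Rightarrow> 'c set) \<Rightarrow> bool" where
  "concept_hierarchy lmax n k D level C children \<longleftrightarrow>
     (\<forall>c\<in>D. level c \<le> lmax) \<and>
     card {c\<in>D. level c = 0} = n \<and>
     C \<subseteq> D \<and>
     card {c\<in>C. level c = lmax} = k \<and>
     (\<forall>c\<in>C. 1 \<le> level c \<longrightarrow>
        children c \<subseteq> {c'\<in>C. level c' = level c - 1} \<and> card (children c) = k) \<and>
     (\<forall>c\<in>C. \<forall>c'\<in>C. 1 \<le> level c \<and> level c' = level c \<and> c \<noteq> c' \<longrightarrow>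
        children c \<inter> children c' = {})"

fun Blev :: "('c \<Rightarrow> nat) \<Rightarrow> 'c set \<Rightarrow> ('c \<Rightarrow> 'c set) \<Rightarrow> nat \<Rightarrow> real \<Rightarrow> 'c set \<Rightarrow> nat \<Rightarrow> 'c set" where
  "Blev level C children k r B 0 = B \<inter> {c\<in>C. level c = 0}"
| "Blev level C children k r B (Suc l) =
     {c\<in>C. level c = Suc l \<and>
        real (card (children c \<inter> Blev level C children k r B l)) \<ge> r * real k}"

definition supp :: "nat \<Rightarrow> ('c \<Rightarrow> nat) \<Rightarrow> 'c set \<Rightarrow> ('c \<Rightarrow> 'c set) \<Rightarrow> nat \<Rightarrow> real \<Rightarrow> 'c set \<Rightarrow> 'c set" where
  "supp lmax level C children k r B = (\<Union>l\<in>{0..lmax}. Blev level C children k r B l)"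

definition network ::
  "nat \<Rightarrow> 'c set \<Rightarrow> ('c \<Rightarrow> nat) \<Rightarrow> 'c set \<Rightarrow> 'n set \<Rightarrow> ('n \<Rightarrow> nat) \<Rightarrow> ('c \<Rightarrow> 'n set) \<Rightarrow> nat \<Rightarrow> bool" where
  "network lmax D level C N layer reps m \<longleftrightarrow>
     finite N \<and> (\<forall>u\<in>N. layer u \<le> lmax) \<and>
     (\<forall>c\<in>{c\<in>D. level c = 0} \<union> C.
        reps c \<subseteq> {u\<in>N. layer u = level c} \<and> card (reps c) = m) \<and>
     (\<forall>c\<in>{c\<in>D. level c = 0} \<union> C. \<forall>c'\<in>{c\<in>D. level c = 0} \<union> C.
        c \<noteq> c' \<longrightarrow> reps c \<inter> reps c' = {})"

text \<open>Weight w(u,v) (only used for u in layer l-1 and v in layer l).\<close>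
definition weight ::
  "('c \<Rightarrow> nat) \<Rightarrow> 'c set \<Rightarrow> ('c \<Rightarrow> 'c set) \<Rightarrow> ('c \<Rightarrow> 'n set) \<Rightarrow> 'n \<Rightarrow> 'n \<Rightarrow> real" where
  "weight level C children reps u v =
     (if \<exists>c\<in>C. 1 \<le> level c \<and> v \<in> reps c \<and> (\<exists>c'\<in>children c. u \<in> reps c') then 1 else 0)"

fun fires ::
  "'n set \<Rightarrow> ('n \<Rightarrow> nat) \<Rightarrow> ('c \<Rightarrow> nat) \<Rightarrow> 'c set \<Rightarrow> ('c \<Rightarrow> 'c set) \<Rightarrow> ('c \<Rightarrow> 'n set) \<Rightarrow>
   'n set \<Rightarrow> 'c set \<Rightarrow> real \<Rightarrow> nat \<Rightarrow> 'n \<Rightarrow> bool" where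
  "fires N layer level C children reps F B tau 0 u =
     (u \<in> N \<and> u \<notin> F \<and> layer u = 0 \<and> u \<in> (\<Union>b\<in>B. reps b))"
| "fires N layer level C children reps F B tau (Suc t) u =
     (u \<in> N \<and> u \<notin> F \<and> 1 \<le> layer u \<and>
      (\<Sum>u'\<in>{u'\<in>N. layer u' = layer u - 1}.
          weight level C children reps u' u *
          (if fires N layer level C children reps F B tau t u' then 1 else 0)) \<ge> tau)"

end

theory Submission
  imports Defs
begin

text \<open>By induction on \<open>l\<close>, every non-failed representative of a concept in \<open>B(l)\<close> fires at
  time \<open>l\<close>. A concept \<open>c \<in> B(l+1)\<close> has at least \<open>r\<^sub>2k\<close> children in \<open>B(l)\<close>; their sets of
  non-failed representatives are disjoint, each has at least \<open>m(1-\<epsilon>)\<close> elements, all fire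
  at time \<open>l\<close>, and all are joined with weight 1 to each representative of \<open>c\<close>. So every
  non-failed representative of \<open>c\<close> receives input at least \<open>r\<^sub>2km(1-\<epsilon>) = \<tau>\<close>.\<close>

lemma Blev_subset: "Blev level C children k r B l \<subseteq> {x\<in>C. level x = l}"
  by (cases l) auto

lemma Blev_level_if_supp:
  "c \<in> supp lmax level C children k r B \<Longrightarrow> c \<in> Blev level C children k r B (level c)"
  unfolding supp_def using Blev_subset by fastforce

lemma card_UN_disjoint_ge:
  assumes "finite I" and "\<forall>i\<in>I. finite (A i)"
    and "\<forall>i\<in>I. \<forall>j\<in>I. i \<noteq> j \<longrightarrow> A i \<inter> A j = {}"
    and "\<forall>i\<in>I. q \<le> real (card (A i))"
  shows "real (card I) * q \<le> real (card (\<Union>i\<in>I. A i))"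
proof -
  have "real (card I) * q = (\<Sum>i\<in>I. q)" by simp
  also have "\<dots> \<le> (\<Sum>i\<in>I. real (card (A i)))" using assms(4) by (intro sum_mono) blast
  also have "\<dots> = real (card (\<Union>i\<in>I. A i))"
    using card_UN_disjoint[OF assms(1-3)] by simp
  finally show ?thesis .
qed

lemma weight_child_rep:
  assumes "x \<in> C" "1 \<le> level x" "v \<in> reps x" "y \<in> children x" "u \<in> reps y"
  shows "weight level C children reps u v = 1"
  using assms unfolding weight_def by auto

lemma fires_SucI:
  assumes "finite N" "v \<in> N" "v \<notin> F" "layer v = Suc l"
    and "S \<subseteq> {u\<in>N. layer u = l}"
    and "\<forall>u\<in>S. fires N layer level C children reps F B tau l u
                \<and> weight level C children reps u v = 1"
    and "tau \<le> real (card S)"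
  shows "fires N layer level C children reps F B tau (Suc l) v"
proof -
  let ?input = "\<lambda>u. weight level C children reps u v *
                     (if fires N layer level C children reps F B tau l u then 1 else 0)"
  have "tau \<le> (\<Sum>u\<in>S. ?input u)" using assms(6,7) by simp
  also have "\<dots> \<le> (\<Sum>u\<in>{u\<in>N. layer u = l}. ?input u)"
    using assms(1,5) by (intro sum_mono2) (auto simp: weight_def)
  finally show ?thesis using assms(2-4) by simp
qed

lemma concept_hierarchy_children:
  assumes "concept_hierarchy lmax n k D level C children" "0 < k" "x \<in> C" "level x = Suc l"
  shows "children x \<subseteq> {y\<in>C. level y = l}" and "finite (children x)"
proof -
  have "\<forall>c\<in>C. 1 \<le> level c \<longrightarrow>
          children c \<subseteq> {y\<in>C. level y = level c - 1} \<and> card (children c) = k"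
    using assms(1) unfolding concept_hierarchy_def by blast
  from bspec[OF this assms(3)]
  have "children x \<subseteq> {y\<in>C. level y = level x - 1} \<and> card (children x) = k"
    using assms(4) by simp
  then show "children x \<subseteq> {y\<in>C. level y = l}" and "finite (children x)"
    using assms(2,4) by (auto intro: card_ge_0_finite)
qed

lemma network_reps:
  assumes "network lmax D level C N layer reps m" "x \<in> {c\<in>D. level c = 0} \<union> C"
  shows "reps x \<subseteq> {u\<in>N. layer u = level x}" and "finite (reps x)"
proof -
  show layer: "reps x \<subseteq> {u\<in>N. layer u = level x}"
    using assms unfolding network_def by blast
  have "finite N" using assms(1) unfolding network_def by blast
  then have "finite {u\<in>N. layer u = level x}" by simp
  then show "finite (reps x)" by (rule finite_subset[OF layer])
qed

lemma network_card_alive_reps_ge: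
  assumes NW: "network lmax D level C N layer reps m"
    and X: "finite X" "X \<subseteq> {c\<in>D. level c = 0} \<union> C"
    and alive: "\<forall>x\<in>X. q \<le> real (card (reps x - F))"
  shows "real (card X) * q \<le> real (card (\<Union>x\<in>X. reps x - F))"
proof (rule card_UN_disjoint_ge[OF X(1) _ _ alive])
  show "\<forall>x\<in>X. finite (reps x - F)" using network_reps(2)[OF NW] X(2) by blast
  show "\<forall>x\<in>X. \<forall>y\<in>X. x \<noteq> y \<longrightarrow> (reps x - F) \<inter> (reps y - F) = {}"
    using NW X(2) unfolding network_def by blast
qed

lemma Blev_reps_fire:
  assumes CH: "concept_hierarchy lmax n k D level C children" and "0 < k"
    and NW: "network lmax D level C N layer reps m"
    and alive: "\<forall>x\<in>C. q \<le> real (card (reps x - F))" and "0 \<le> q"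
    and tau: "tau \<le> r * real k * q"
  shows "\<forall>x\<in>Blev level C children k r B l. \<forall>v\<in>reps x - F.
           fires N layer level C children reps F B tau l v"
proof (induction l)
  case 0
  show ?case using network_reps(1)[OF NW] by fastforce
next
  case (Suc l)
  have "C \<subseteq> D" and "finite N"
    using CH NW unfolding concept_hierarchy_def network_def by blast+
  then have reps_layer: "\<And>y. y \<in> C \<Longrightarrow> reps y \<subseteq> {u\<in>N. layer u = level y}"
    using network_reps(1)[OF NW] by blast
  show ?case
  proof (intro ballI)
    fix x v assume "x \<in> Blev level C children k r B (Suc l)" and v: "v \<in> reps x - F"
    then have x: "x \<in> C" "level x = Suc l"
      and many: "r * real k \<le> real (card (children x \<inter> Blev level C children k r B l))"
      by auto
    note children = concept_hierarchy_children[OF CH \<open>0 < k\<close> x]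
    define X where "X = children x \<inter> Blev level C children k r B l"
    define S where "S = (\<Union>y\<in>X. reps y - F)"
    have "tau \<le> real (card X) * q"
      using tau mult_right_mono[OF many \<open>0 \<le> q\<close>] unfolding X_def by linarith
    also have "\<dots> \<le> real (card S)" unfolding S_def
      by (rule network_card_alive_reps_ge[OF NW])
         (use children \<open>C \<subseteq> D\<close> alive in \<open>auto simp: X_def\<close>)
    finally have enough: "tau \<le> real (card S)" .
    have S_fire: "\<forall>u\<in>S. fires N layer level C children reps F B tau l u
                      \<and> weight level C children reps u v = 1"
    proof
      fix u assume "u \<in> S"
      then obtain y where y: "y \<in> children x" "y \<in> Blev level C children k r B l"
        and u: "u \<in> reps y - F"
        unfolding S_def X_def by blast
      have "fires N layer level C children reps F B tau l u" using Suc.IH y(2) u by blast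
      moreover have "weight level C children reps u v = 1"
        by (rule weight_child_rep) (use x v y u in auto)
      ultimately show "fires N layer level C children reps F B tau l u
                         \<and> weight level C children reps u v = 1" ..
    qed
    have S_layer: "S \<subseteq> {u\<in>N. layer u = l}"
      using children reps_layer unfolding S_def X_def by blast
    have "v \<in> N" "layer v = Suc l" using reps_layer[OF x(1)] x(2) v by auto
    then show "fires N layer level C children reps F B tau (Suc l) v"
      using fires_SucI[OF \<open>finite N\<close> _ _ _ S_layer S_fire enough] v by blast
  qed
qed

theorem theorem7p2:
  fixes lmax n k m :: nat
    and D C :: "'c set" and level :: "'c \<Rightarrow> nat" and children :: "'c \<Rightarrow> 'c set"
    and N F :: "'n set" and layer :: "'n \<Rightarrow> nat" and reps :: "'c \<Rightarrow> 'n set"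
    and r1 r2 \<epsilon> :: real and B :: "'c set" and c :: 'c
  assumes "0 < lmax" "0 < n" "0 < k" "0 < m"
    and "concept_hierarchy lmax n k D level C children"
    and "0 \<le> r1" "r1 \<le> 1" "0 \<le> r2" "r2 \<le> 1" "0 \<le> \<epsilon>" "\<epsilon> \<le> 1"
    and "r1 \<le> r2 * (1 - \<epsilon>)"
    and "network lmax D level C N layer reps m"
    and "\<forall>c'\<in>{c'\<in>D. level c' = 0} \<union> C. real (card (reps c' - F)) \<ge> real m * (1 - \<epsilon>)"
    and "B \<subseteq> {c'\<in>C. level c' = 0}"
    and "c \<in> supp lmax level C children k r2 B"
  shows "real (card {v\<in>reps c.
            fires N layer level C children reps F B (r2 * real k * real m * (1 - \<epsilon>)) (level c) v})
         \<ge> real m * (1 - \<epsilon>)"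
proof -
  let ?q = "real m * (1 - \<epsilon>)"
  let ?fires = "fires N layer level C children reps F B (r2 * real k * real m * (1 - \<epsilon>)) (level c)"
  have alive: "\<forall>x\<in>C. ?q \<le> real (card (reps x - F))" using assms(14) by blast
  have "0 \<le> ?q" using assms(11) by simp
  have c: "c \<in> Blev level C children k r2 B (level c)"
    using assms(16) by (rule Blev_level_if_supp)
  then have "c \<in> C" using Blev_subset[of level C children k r2 B "level c"] by blast
  have "r2 * real k * real m * (1 - \<epsilon>) \<le> r2 * real k * ?q" by (simp add: mult.assoc)
  from Blev_reps_fire[OF assms(5,3,13) alive \<open>0 \<le> ?q\<close> this]
  have "\<forall>v\<in>reps c - F. ?fires v" using c by blast
  then have "reps c - F \<subseteq> {v\<in>reps c. ?fires v}" by blast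
  moreover have "finite (reps c)" using network_reps(2)[OF assms(13)] \<open>c \<in> C\<close> by blast
  ultimately have "real (card (reps c - F)) \<le> real (card {v\<in>reps c. ?fires v})"
    by (simp add: card_mono)
  moreover have "?q \<le> real (card (reps c - F))" using alive \<open>c \<in> C\<close> by blast
  ultimately show ?thesis by linarith
qed

end
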